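(* Let $U,V$ be unitary operators on a finite-dimensional complex Hilbert space $\mathcal H$. Then there exists a real number $x$ such that $$D(U,V)=\tfrac12\,\|U-e^{ix}V\|,$$ where $\|\cdot\|$ is the operator norm $\|A\|=\max_{\|\psi\|=1}\|A\psi\|$.
   Context: For unitary operators $U,V$ on a finite-dimensional complex Hilbert space $\mathcal H$ define the u-distance $D(U,V)=\max_{\|\psi\|=1}\big(1-|\langle\psi,U^\dagger V\psi\rangle|^2\big)^{1/2}=\big(1-\min_{\|\psi\|=1}|\langle\psi,U^\dagger V\psi\rangle|^2\big)^{1/2}$. *)

theory Defs
  imports "HOL-Analysis.Analysis"
begin

text \<open>The finite-dimensional complex Hilbert space H is modelled as complex ^ 'n
  ('n a finite index type, so dim H = CARD('n) >= 1); the HOL-Analysis norm on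
  complex ^ 'n is the Hilbert-space norm sqrt(sum |psi_i|^2).\<close>

definition cinner :: "complex ^ 'n \<Rightarrow> complex ^ 'n \<Rightarrow> complex" where
  "cinner \<psi> \<phi> = (\<Sum>i\<in>UNIV. cnj (\<psi> $ i) * \<phi> $ i)"

definition adjoint_mat :: "complex ^ 'n ^ 'n \<Rightarrow> complex ^ 'n ^ 'n" where
  "adjoint_mat A = (\<chi> i j. cnj (A $ j $ i))"

definition unitary_mat :: "complex ^ 'n ^ 'n \<Rightarrow> bool" where
  "unitary_mat U \<longleftrightarrow> U ** adjoint_mat U = mat 1 \<and> adjoint_mat U ** U = mat 1"

definition udist :: "complex ^ 'n ^ 'n \<Rightarrow> complex ^ 'n ^ 'n \<Rightarrow> real" where
  "udist U V = Sup {sqrt (1 - (cmod (cinner \<psi> ((adjoint_mat U ** V) *v \<psi>)))\<^sup>2) | \<psi>. norm \<psi> = 1}"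

definition op_norm :: "complex ^ 'n ^ 'n \<Rightarrow> real" where
  "op_norm A = Sup {norm (A *v \<psi>) | \<psi>. norm \<psi> = 1}"

end

theory Submission
  imports Defs
begin

(* Put W = U^* V, a unitary matrix. Then D(U,V) = sqrt (1 - m^2), where m is the distance from 0
   to the numerical range N = {<psi, W psi> : |psi| = 1}, and ||U - c V|| = max_i |1 - c l_i| for
   the eigenvalues l_i of W. By the spectral theorem N is the convex hull of the l_i, which lie
   on the unit circle. Choosing c with c l_0 = -1 makes the norm 2 >= 2 D. Choosing
   c = cnj z0 / m, with z0 the point of N closest to 0, puts every c l_i into the half-plane
   Re >= m, so the norm is at most sqrt (2 - 2 m) <= 2 D. The intermediate value theorem in the
   angle x of c = e^(ix) finishes the proof. *)

lemma linear_coeff_zero_if_quadratic_nonneg: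
  fixes a b :: real
  assumes "\<And>t. 0 \<le> a * t + b * t\<^sup>2"
  shows "a = 0"
proof (rule ccontr)
  assume "a \<noteq> 0"
  define c where "c = \<bar>b\<bar> + 1"
  have "c > 0" "b - c < 0" by (auto simp: c_def)
  have "a * (- a / c) + b * (- a / c)\<^sup>2 = a\<^sup>2 * (b - c) / c\<^sup>2"
    using \<open>c > 0\<close> by (simp add: field_simps power2_eq_square)
  also have "\<dots> < 0"
    using \<open>a \<noteq> 0\<close> \<open>c > 0\<close> \<open>b - c < 0\<close> by (simp add: divide_neg_pos mult_pos_neg)
  finally show False using assms[of "- a / c"] by linarith
qed

lemma closest_to_origin_inner_ge:
  fixes C :: "'a::real_inner set"
  assumes "convex C" "x \<in> C" "y \<in> C" and closest: "\<forall>z\<in>C. norm x \<le> norm z"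
  shows "(norm x)\<^sup>2 \<le> inner x y"
proof (rule ccontr)
  assume "\<not> ?thesis"
  then have "inner (0 - x) (y - x) > 0"
    by (simp add: inner_diff_right power2_norm_eq_inner)
  then obtain u where "0 < u" "u \<le> 1" and closer: "dist (x + u *\<^sub>R (y - x)) 0 < dist x 0"
    using closer_point_lemma by blast
  have "x + u *\<^sub>R (y - x) \<in> C"
    using convexD_alt[OF assms(1-3), of u] \<open>0 < u\<close> \<open>u \<le> 1\<close> by (simp add: algebra_simps)
  with closest closer show False by fastforce
qed

lemma convex_convex_combinations:
  fixes f :: "'i \<Rightarrow> 'a::real_vector"
  shows "convex {\<Sum>i\<in>I. w i *\<^sub>R f i | w. (\<forall>i\<in>I. 0 \<le> w i) \<and> sum w I = 1}"
proof (rule convexI, clarify)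
  fix w v :: "'i \<Rightarrow> real" and a b :: real
  assume "\<forall>i\<in>I. 0 \<le> w i" "sum w I = 1" "\<forall>i\<in>I. 0 \<le> v i" "sum v I = 1" "0 \<le> a" "0 \<le> b" "a + b = 1"
  then show "\<exists>u. a *\<^sub>R (\<Sum>i\<in>I. w i *\<^sub>R f i) + b *\<^sub>R (\<Sum>i\<in>I. v i *\<^sub>R f i)
      = (\<Sum>i\<in>I. u i *\<^sub>R f i) \<and> (\<forall>i\<in>I. 0 \<le> u i) \<and> sum u I = 1"
    by (intro exI[of _ "\<lambda>i. a * w i + b * v i"])
      (simp add: scaleR_sum_right sum.distrib scaleR_add_left sum_distrib_left[symmetric])
qed

lemma continuous_on_Max:
  fixes f :: "'i \<Rightarrow> 'a::topological_space \<Rightarrow> real"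
  assumes "finite I" "I \<noteq> {}" "\<And>i. i \<in> I \<Longrightarrow> continuous_on S (f i)"
  shows "continuous_on S (\<lambda>x. Max ((\<lambda>i. f i x) ` I))"
  using assms
proof (induction I rule: finite_ne_induct)
  case (singleton i)
  then show ?case by simp
next
  case (insert i I)
  then have "continuous_on S (\<lambda>x. max (f i x) (Max ((\<lambda>i. f i x) ` I)))"
    by (intro continuous_on_max) auto
  with insert show ?case by simp
qed

lemma cmod_one_minus_le:
  fixes c l :: complex
  assumes "cmod c = 1" "cmod l = 1" "0 \<le> m" "m \<le> 1" "m \<le> Re (c * l)"
  shows "cmod (1 - c * l) \<le> 2 * sqrt (1 - m\<^sup>2)"
proof -
  have "m\<^sup>2 \<le> 1"
    using assms(3,4) by (simp add: abs_square_le_1)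
  have "(cmod (1 - c * l))\<^sup>2 = 1 - 2 * Re (c * l) + (cmod (c * l))\<^sup>2"
    unfolding cmod_power2 by (simp add: power2_eq_square algebra_simps)
  also have "\<dots> = 2 - 2 * Re (c * l)"
    using assms(1,2) by (simp add: norm_mult)
  also have "\<dots> \<le> 2 - 2 * m"
    using assms(5) by simp
  also have "\<dots> \<le> 4 * (1 - m\<^sup>2)"
  proof -
    have "0 \<le> (1 - m) * (1 + 2 * m)"
      using assms(3,4) by simp
    then show ?thesis by (simp add: power2_eq_square algebra_simps)
  qed
  also have "\<dots> = (2 * sqrt (1 - m\<^sup>2))\<^sup>2"
    using \<open>m\<^sup>2 \<le> 1\<close> by (simp add: power_mult_distrib)
  finally show ?thesis
    by (rule power2_le_imp_le) (simp add: \<open>m\<^sup>2 \<le> 1\<close>)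
qed

lemma cis_Arg_unit: "cmod z = 1 \<Longrightarrow> cis (Arg z) = z"
  using rcis_cmod_Arg[of z] by (simp add: rcis_def)

section \<open>Complex inner product\<close>

lemma cinner_add_right: "cinner u (v + w) = cinner u v + cinner u w"
  by (simp add: cinner_def algebra_simps sum.distrib)

lemma cinner_add_left: "cinner (u + v) w = cinner u w + cinner v w"
  by (simp add: cinner_def algebra_simps sum.distrib)

lemma cinner_diff_right: "cinner u (v - w) = cinner u v - cinner u w"
  by (simp add: cinner_def algebra_simps sum_subtractf)

lemma cinner_scale_right: "cinner u (c *s v) = c * cinner u v"
  by (simp add: cinner_def sum_distrib_left algebra_simps)

lemma cinner_scale_left: "cinner (c *s u) v = cnj c * cinner u v"
  by (simp add: cinner_def sum_distrib_left algebra_simps)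

lemma cinner_zero_right [simp]: "cinner u 0 = 0"
  by (simp add: cinner_def)

lemma cinner_sum_right: "cinner u (sum f A) = (\<Sum>i\<in>A. cinner u (f i))"
  by (induction A rule: infinite_finite_induct) (auto simp: cinner_add_right)

lemma cnj_cinner: "cnj (cinner u v) = cinner v u"
  by (simp add: cinner_def mult.commute)

lemma cinner_self: "cinner v v = complex_of_real ((norm v)\<^sup>2)"
proof -
  have "(norm v)\<^sup>2 = (\<Sum>i\<in>UNIV. (cmod (v $ i))\<^sup>2)"
    by (simp add: norm_vec_def L2_set_def sum_nonneg)
  then show ?thesis
    by (simp add: cinner_def complex_norm_square[symmetric] mult.commute)
qed

lemma cinner_self_eq_1_iff: "cinner v v = 1 \<longleftrightarrow> norm v = 1"
  by (simp add: cinner_self abs_square_eq_1 del: of_real_power)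

lemma norm_eq_iff_cinner_self_eq: "norm u = norm v \<longleftrightarrow> cinner u u = cinner v v"
  by (simp add: cinner_self power2_eq_iff_nonneg del: of_real_power)

lemma norm_smult_vec: "norm (c *s v) = cmod c * norm (v :: complex^'n)"
proof -
  have "complex_of_real ((norm (c *s v))\<^sup>2) = complex_of_real ((cmod c * norm v)\<^sup>2)"
    by (simp add: cinner_self[symmetric] cinner_scale_left cinner_scale_right
        power_mult_distrib complex_norm_square del: of_real_power)
  then have "(norm (c *s v))\<^sup>2 = (cmod c * norm v)\<^sup>2"
    by (simp only: of_real_eq_iff)
  then show ?thesis by (simp add: power2_eq_iff_nonneg)
qed

lemma adjoint_mat_adjoint_mat [simp]: "adjoint_mat (adjoint_mat A) = A"
  by (simp add: vec_eq_iff adjoint_mat_def)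

lemma adjoint_mat_mult: "adjoint_mat (A ** B) = adjoint_mat B ** adjoint_mat A"
  by (simp add: vec_eq_iff adjoint_mat_def matrix_matrix_mult_def mult.commute)

lemma cinner_adjoint_right: "cinner u (A *v v) = cinner (adjoint_mat A *v u) v"
proof -
  have "cinner u (A *v v) = (\<Sum>i\<in>UNIV. \<Sum>j\<in>UNIV. cnj (u $ i) * (A $ i $ j * v $ j))"
    by (simp add: cinner_def matrix_vector_mult_def sum_distrib_left)
  also have "\<dots> = (\<Sum>j\<in>UNIV. \<Sum>i\<in>UNIV. cnj (u $ i) * (A $ i $ j * v $ j))"
    by (rule sum.swap)
  also have "\<dots> = cinner (adjoint_mat A *v u) v"
    by (simp add: cinner_def matrix_vector_mult_def adjoint_mat_def sum_distrib_left
        sum_distrib_right ac_simps)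
  finally show ?thesis .
qed

lemma cinner_adjoint_left: "cinner (A *v u) v = cinner u (adjoint_mat A *v v)"
  by (metis adjoint_mat_adjoint_mat cinner_adjoint_right)

lemma closed_vec_subspace:
  fixes P :: "(complex^'n) set"
  assumes "vec.subspace P"
  shows "closed P"
proof (rule closed_subspace)
  show "subspace P"
    using assms unfolding vec.subspace_def subspace_def
    by (metis scaleR_conv_of_real vector_scaleR_component vec_eq_iff vector_smult_component)
qed

section \<open>Spectral theorem for unitary matrices\<close>

lemma unitary_mat_adjoint: "unitary_mat U \<Longrightarrow> unitary_mat (adjoint_mat U)"
  by (simp add: unitary_mat_def)

lemma unitary_mat_mult:
  assumes "unitary_mat U" "unitary_mat V"
  shows "unitary_mat (U ** V)"
proof -
  have "(U ** V) ** adjoint_mat (U ** V) = U ** (V ** adjoint_mat V) ** adjoint_mat U"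
    and "adjoint_mat (U ** V) ** (U ** V) = adjoint_mat V ** (adjoint_mat U ** U) ** V"
    by (simp_all add: adjoint_mat_mult matrix_mul_assoc)
  with assms show ?thesis
    by (simp add: unitary_mat_def matrix_mul_rid)
qed

lemma unitary_mat_cancel:
  assumes "unitary_mat U"
  shows "adjoint_mat U *v (U *v x) = x" "U *v (adjoint_mat U *v x) = x"
  using assms by (simp_all add: unitary_mat_def matrix_vector_mul_assoc)

lemma unitary_mat_cinner:
  assumes "unitary_mat U"
  shows "cinner (U *v x) (U *v y) = cinner x y"
  by (simp add: cinner_adjoint_left unitary_mat_cancel[OF assms])

lemma unitary_mat_norm:
  assumes "unitary_mat U"
  shows "norm (U *v x) = norm x"
  by (simp add: norm_eq_iff_cinner_self_eq unitary_mat_cinner[OF assms])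

lemma unitary_eigenvalue_norm:
  assumes "unitary_mat W" "W *v v = l *s v" "v \<noteq> 0"
  shows "cmod l = 1"
  using unitary_mat_norm[OF assms(1), of v] assms(2,3) by (simp add: norm_smult_vec)

lemma unitary_adjoint_eigenvector:
  assumes W: "unitary_mat W" and eig: "W *v v = l *s v" and "cmod l = 1"
  shows "adjoint_mat W *v v = cnj l *s v"
proof -
  have "cnj l * l = 1"
    using \<open>cmod l = 1\<close> by (simp add: complex_norm_square[symmetric] mult.commute)
  have "v = l *s (adjoint_mat W *v v)"
    using unitary_mat_cancel(1)[OF W, of v] by (simp add: eig vec.scale)
  then have "cnj l *s v = (cnj l * l) *s (adjoint_mat W *v v)"
    by (metis vector_smult_assoc)
  with \<open>cnj l * l = 1\<close> show ?thesis by simp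
qed

lemma hermitian_cinner_swap:
  assumes "adjoint_mat H = H"
  shows "cinner u (H *v v) = cnj (cinner v (H *v u))"
  by (metis assms cinner_adjoint_right cnj_cinner)

text \<open>Write \<eta> = H u - h u \<in> P. The form v \<mapsto> Re <v, (H - h) v> is nonnegative on P, vanishes at u
  and equals 2 t |\<eta>|^2 + O(t^2) at u + t \<eta>; hence \<eta> = 0.\<close>
lemma hermitian_rayleigh_minimizer_eigenvector:
  fixes H :: "complex^'n^'n"
  assumes herm: "adjoint_mat H = H" and P: "vec.subspace P"
    and inv: "\<And>v. v \<in> P \<Longrightarrow> H *v v \<in> P" and u: "u \<in> P"
    and min: "\<And>v. v \<in> P \<Longrightarrow> h * (norm v)\<^sup>2 \<le> Re (cinner v (H *v v))"
    and attained: "Re (cinner u (H *v u)) = h * (norm u)\<^sup>2"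
  shows "H *v u = complex_of_real h *s u"
proof -
  define B where "B x y = cinner x (H *v y) - complex_of_real h * cinner x y" for x y
  define \<eta> where "\<eta> = H *v u - complex_of_real h *s u"
  have \<eta>P: "\<eta> \<in> P"
    unfolding \<eta>_def using P u inv by (intro vec.subspace_diff vec.subspace_scale) auto
  have B_sym: "B x y = cnj (B y x)" for x y
    using hermitian_cinner_swap[OF herm, of x y] by (simp add: B_def cnj_cinner)
  have B_\<eta>: "B x u = cinner x \<eta>" for x
    by (simp add: B_def \<eta>_def cinner_diff_right cinner_scale_right)
  have B_add_left: "B (x + y) z = B x z + B y z"
    and B_add_right: "B x (y + z) = B x y + B x z"
    and B_scale_left: "B (c *s x) y = cnj c * B x y"
    and B_scale_right: "B x (c *s y) = c * B x y" for x y z c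
    by (simp_all add: B_def vec.add vec.scale cinner_add_left cinner_add_right
        cinner_scale_left cinner_scale_right algebra_simps)
  have "0 \<le> 2 * (norm \<eta>)\<^sup>2 * t + Re (B \<eta> \<eta>) * t\<^sup>2" for t
  proof -
    let ?v = "u + complex_of_real t *s \<eta>"
    have "?v \<in> P" using P u \<eta>P by (simp add: vec.subspace_add vec.subspace_scale)
    then have "0 \<le> Re (B ?v ?v)"
      using min by (simp add: B_def cinner_self)
    have "B ?v ?v = B u u + complex_of_real t * (B u \<eta> + B \<eta> u)
        + complex_of_real (t\<^sup>2) * B \<eta> \<eta>"
      by (simp add: B_add_left B_add_right B_scale_left B_scale_right power2_eq_square
          algebra_simps)
    then have "Re (B ?v ?v) = Re (B u u) + t * Re (B u \<eta> + B \<eta> u) + t\<^sup>2 * Re (B \<eta> \<eta>)"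
      by simp
    also have "Re (B u u) = 0"
      using attained by (simp add: B_def cinner_self)
    also have "Re (B u \<eta> + B \<eta> u) = 2 * (norm \<eta>)\<^sup>2"
      by (subst B_sym) (simp add: B_\<eta> cinner_self)
    finally show ?thesis
      using \<open>0 \<le> Re (B ?v ?v)\<close> by (simp add: algebra_simps)
  qed
  then have "2 * (norm \<eta>)\<^sup>2 = 0"
    by (rule linear_coeff_zero_if_quadratic_nonneg)
  then have "\<eta> = 0" by simp
  then show ?thesis by (simp add: \<eta>_def)
qed

lemma hermitian_eigenvector_in_subspace:
  fixes H :: "complex^'n^'n"
  assumes herm: "adjoint_mat H = H" and P: "vec.subspace P"
    and inv: "\<And>v. v \<in> P \<Longrightarrow> H *v v \<in> P" and nontrivial: "P \<noteq> {0}"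
  shows "\<exists>u\<in>P. norm u = 1 \<and> (\<exists>a. H *v u = a *s u)"
proof -
  define g where "g v = Re (cinner v (H *v v))" for v
  define S where "S = P \<inter> sphere 0 1"
  have normalized: "complex_of_real (1 / norm v) *s v \<in> S" if "v \<in> P" "v \<noteq> 0" for v
    using that P by (simp add: S_def vec.subspace_scale norm_smult_vec norm_divide)
  have "compact S"
    unfolding S_def using P by (intro closed_Int_compact closed_vec_subspace compact_sphere)
  moreover have "S \<noteq> {}"
    using nontrivial normalized vec.subspace_0[OF P] by blast
  moreover have "continuous_on S g"
    unfolding g_def cinner_def matrix_vector_mult_def by (intro continuous_intros)
  ultimately obtain u where u: "u \<in> S" and u_min: "\<And>w. w \<in> S \<Longrightarrow> g u \<le> g w"
    using continuous_attains_inf by metis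
  have g_scale: "g (complex_of_real r *s v) = r\<^sup>2 * g v" for r v
    by (simp add: g_def vec.scale cinner_scale_left cinner_scale_right power2_eq_square)
  have "g u * (norm v)\<^sup>2 \<le> g v" if "v \<in> P" for v
  proof (cases "v = 0")
    case True
    then show ?thesis by (simp add: g_def)
  next
    case False
    have "g u \<le> g (complex_of_real (1 / norm v) *s v)"
      using u_min normalized[OF that False] .
    also have "\<dots> = g v / (norm v)\<^sup>2"
      by (simp only: g_scale) (simp add: power_divide)
    finally show ?thesis
      using False by (simp add: field_simps)
  qed
  then have "H *v u = complex_of_real (g u) *s u"
    using u by (intro hermitian_rayleigh_minimizer_eigenvector[OF herm P inv]) (auto simp: S_def g_def)
  then show ?thesis
    using u unfolding S_def by auto
qed

lemma commuting_hermitian_common_eigenvector: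
  fixes A B :: "complex^'n^'n"
  assumes A_herm: "adjoint_mat A = A" and B_herm: "adjoint_mat B = B"
    and commute: "\<And>v. A *v (B *v v) = B *v (A *v v)"
    and P: "vec.subspace P" and A_inv: "\<And>v. v \<in> P \<Longrightarrow> A *v v \<in> P"
    and B_inv: "\<And>v. v \<in> P \<Longrightarrow> B *v v \<in> P" and nontrivial: "P \<noteq> {0}"
  shows "\<exists>w\<in>P. norm w = 1 \<and> (\<exists>a. A *v w = a *s w) \<and> (\<exists>b. B *v w = b *s w)"
proof -
  obtain u a where u: "u \<in> P" "norm u = 1" and ua: "A *v u = a *s u"
    using hermitian_eigenvector_in_subspace[OF A_herm P A_inv nontrivial] by blast
  define Q where "Q = P \<inter> {v. A *v v = a *s v}"
  have "vec.subspace {v. A *v v = a *s v}"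
    by (auto simp: vec.subspace_def vec.add vec.scale vector_smult_assoc vector_add_ldistrib
        mult.commute)
  then have Q: "vec.subspace Q"
    unfolding Q_def using P by (rule vec.subspace_inter[rotated])
  have Q_inv: "B *v v \<in> Q" if "v \<in> Q" for v
    using that B_inv commute[of v] by (auto simp: Q_def vec.scale)
  have "u \<in> Q" "u \<noteq> 0"
    using u ua by (auto simp: Q_def)
  then have "Q \<noteq> {0}" by blast
  then obtain w where "w \<in> Q" "norm w = 1" "\<exists>b. B *v w = b *s w"
    using hermitian_eigenvector_in_subspace[OF B_herm Q Q_inv] by blast
  then show ?thesis
    unfolding Q_def by blast
qed

text \<open>With W' the adjoint of W, the Hermitian matrices A = W + W' and B = i (W' - W) commute
  and 2 W = A + i B, so a common eigenvector of A and B is an eigenvector of W.\<close>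
lemma unitary_eigenvector_in_subspace:
  fixes W :: "complex^'n^'n"
  assumes W: "unitary_mat W" and P: "vec.subspace P"
    and inv: "\<And>v. v \<in> P \<Longrightarrow> W *v v \<in> P" and inv_adj: "\<And>v. v \<in> P \<Longrightarrow> adjoint_mat W *v v \<in> P"
    and nontrivial: "P \<noteq> {0}"
  shows "\<exists>u\<in>P. norm u = 1 \<and> (\<exists>l. W *v u = l *s u)"
proof -
  define A where "A = W + adjoint_mat W"
  define B where "B = (\<chi> i j. \<i> * (adjoint_mat W - W) $ i $ j)"
  have A_herm: "adjoint_mat A = A"
    by (simp add: vec_eq_iff A_def adjoint_mat_def add.commute)
  have B_herm: "adjoint_mat B = B"
    by (simp add: vec_eq_iff B_def adjoint_mat_def algebra_simps)
  have A_apply: "A *v v = W *v v + adjoint_mat W *v v" for v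
    by (simp add: A_def matrix_vector_mult_add_rdistrib)
  have B_apply: "B *v v = \<i> *s (adjoint_mat W *v v - W *v v)" for v
    by (simp add: B_def vec_eq_iff matrix_vector_mult_def sum_distrib_left sum_subtractf[symmetric]
        algebra_simps)
  have W_apply: "W *v v = (1/2) *s (A *v v + \<i> *s (B *v v))" for v
    by (simp add: A_apply B_apply vec_eq_iff algebra_simps)
  have "A *v (B *v v) = B *v (A *v v)" for v
    by (simp add: A_apply B_apply vec.add vec.diff vec.scale unitary_mat_cancel[OF W] vec_eq_iff
        algebra_simps)
  moreover have "A *v v \<in> P" and "B *v v \<in> P" if "v \<in> P" for v
    using that by (simp_all add: A_apply B_apply inv inv_adj P vec.subspace_add vec.subspace_diff
        vec.subspace_scale)
  ultimately obtain w a b where w: "w \<in> P" "norm w = 1"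
    and "A *v w = a *s w" "B *v w = b *s w"
    using commuting_hermitian_common_eigenvector[OF A_herm B_herm _ P _ _ nontrivial] by metis
  then have "W *v w = ((a + \<i> * b) / 2) *s w"
    by (simp add: W_apply vec_eq_iff algebra_simps)
  with w show ?thesis
    by blast
qed

definition orthonormal_family :: "nat \<Rightarrow> (nat \<Rightarrow> complex^'n) \<Rightarrow> bool" where
  "orthonormal_family K e \<longleftrightarrow> (\<forall>i<K. \<forall>j<K. cinner (e i) (e j) = (if i = j then 1 else 0))"

lemma orthonormal_family_nonzero:
  assumes "orthonormal_family K e" "i < K"
  shows "e i \<noteq> 0"
  using assms cinner_zero_right[of "e i"] unfolding orthonormal_family_def by fastforce

lemma cinner_orthonormal_sum:
  assumes "orthonormal_family K e" "j < K"
  shows "cinner (e j) (\<Sum>i<K. c i *s e i) = c j"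
proof -
  have "cinner (e j) (\<Sum>i<K. c i *s e i) = (\<Sum>i<K. c i * cinner (e j) (e i))"
    by (simp add: cinner_sum_right cinner_scale_right)
  also have "\<dots> = (\<Sum>i<K. if i = j then c i else 0)"
    using assms by (intro sum.cong) (auto simp: orthonormal_family_def)
  finally show ?thesis
    using assms(2) by simp
qed

lemma orthonormal_family_le_CARD:
  fixes e :: "nat \<Rightarrow> complex^'n"
  assumes e: "orthonormal_family K e"
  shows "K \<le> CARD('n)"
proof -
  have inj: "inj_on e {..<K}"
    using e unfolding orthonormal_family_def inj_on_def by (metis lessThan_iff zero_neq_one)
  have "vec.independent (e ` {..<K})"
  proof (rule vec.independent_if_scalars_zero)
    fix f x
    assume "(\<Sum>y\<in>e ` {..<K}. f y *s y) = 0" and "x \<in> e ` {..<K}"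
    then obtain j where "j < K" "x = e j" and "(\<Sum>i<K. f (e i) *s e i) = 0"
      by (auto simp: sum.reindex[OF inj])
    then show "f x = 0"
      using cinner_orthonormal_sum[OF e, of j "\<lambda>i. f (e i)"] by simp
  qed simp
  then have "card (e ` {..<K}) \<le> vec.dim (UNIV :: (complex^'n) set)"
    by (rule vec.independent_card_le_dim[OF subset_UNIV])
  then show ?thesis
    by (simp add: card_image[OF inj] card_cart_basis)
qed

lemma orthonormal_family_expansion:
  assumes e: "orthonormal_family K e"
    and complete: "\<And>w. \<forall>i<K. cinner (e i) w = 0 \<Longrightarrow> w = 0"
  shows "v = (\<Sum>i<K. cinner (e i) v *s e i)"
proof -
  have "\<forall>j<K. cinner (e j) (v - (\<Sum>i<K. cinner (e i) v *s e i)) = 0"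
    by (simp add: cinner_diff_right cinner_orthonormal_sum[OF e])
  then show ?thesis
    using complete by fastforce
qed

lemma unitary_eigenvector_orthogonal_to_family:
  assumes W: "unitary_mat W" and e: "orthonormal_family K e"
    and eig: "\<And>i. i < K \<Longrightarrow> W *v e i = l i *s e i"
    and v: "v \<noteq> 0" "\<forall>i<K. cinner (e i) v = 0"
  shows "\<exists>u m. orthonormal_family (Suc K) (e(K := u)) \<and> W *v u = m *s u"
proof -
  define P where "P = {v. \<forall>i<K. cinner (e i) v = 0}"
  have P: "vec.subspace P"
    by (auto simp: vec.subspace_def P_def cinner_add_right cinner_scale_right)
  have adj_eig: "adjoint_mat W *v e i = cnj (l i) *s e i" if "i < K" for i
    using unitary_adjoint_eigenvector[OF W eig[OF that]]
      unitary_eigenvalue_norm[OF W eig[OF that] orthonormal_family_nonzero[OF e that]] .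
  have "W *v w \<in> P" if "w \<in> P" for w
    using that by (simp add: P_def cinner_adjoint_right adj_eig cinner_scale_left)
  moreover have "adjoint_mat W *v w \<in> P" if "w \<in> P" for w
    using that by (simp add: P_def cinner_adjoint_left[symmetric] eig cinner_scale_left)
  moreover have "P \<noteq> {0}"
    using v by (auto simp: P_def)
  ultimately obtain u m where u: "u \<in> P" "norm u = 1" and um: "W *v u = m *s u"
    using unitary_eigenvector_in_subspace[OF W P] by blast
  have "cinner u u = 1"
    using u(2) by (simp add: cinner_self_eq_1_iff)
  moreover have "cinner u (e i) = 0" if "i < K" for i
    using u(1) that cnj_cinner[of u "e i"] by (simp add: P_def)
  ultimately have "orthonormal_family (Suc K) (e(K := u))"
    using e u(1) unfolding orthonormal_family_def P_def by (auto simp: less_Suc_eq)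
  with um show ?thesis by blast
qed

locale unitary_eigenbasis =
  fixes W :: "complex^'n^'n" and K :: nat and e :: "nat \<Rightarrow> complex^'n" and l :: "nat \<Rightarrow> complex"
  assumes orthonormal: "orthonormal_family K e"
    and eigenvector: "\<And>i. i < K \<Longrightarrow> W *v e i = l i *s e i"
    and eigenvalue_norm: "\<And>i. i < K \<Longrightarrow> cmod (l i) = 1"
    and expansion: "\<And>v. v = (\<Sum>i<K. cinner (e i) v *s e i)"

lemma unitary_eigenbasis_exists:
  fixes W :: "complex^'n^'n"
  assumes W: "unitary_mat W"
  obtains K e l where "unitary_eigenbasis W K e l"
proof -
  define eigenfamily where
    "eigenfamily k \<longleftrightarrow> (\<exists>e l. orthonormal_family k e \<and> (\<forall>i<k. W *v e i = l i *s e i))" for k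
  have "eigenfamily 0"
    by (simp add: eigenfamily_def orthonormal_family_def)
  moreover have "\<forall>k. eigenfamily k \<longrightarrow> id k < Suc CARD('n)"
    using orthonormal_family_le_CARD by (fastforce simp: eigenfamily_def)
  ultimately obtain K where "eigenfamily K" and K_max: "\<And>k. eigenfamily k \<Longrightarrow> k \<le> K"
    using ex_has_greatest_nat[of eigenfamily 0 id "Suc CARD('n)"] by auto
  then obtain e l where e: "orthonormal_family K e" and eig: "\<And>i. i < K \<Longrightarrow> W *v e i = l i *s e i"
    by (auto simp: eigenfamily_def)
  have complete: "w = 0" if orth: "\<forall>i<K. cinner (e i) w = 0" for w
  proof (rule ccontr)
    assume "w \<noteq> 0"
    then obtain u m where "orthonormal_family (Suc K) (e(K := u))" "W *v u = m *s u"
      using unitary_eigenvector_orthogonal_to_family[OF W e eig _ orth] by blast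
    then have "eigenfamily (Suc K)"
      unfolding eigenfamily_def using eig
      by (intro exI[of _ "e(K := u)"] exI[of _ "l(K := m)"]) (auto simp: less_Suc_eq)
    with K_max show False by fastforce
  qed
  have "cmod (l i) = 1" if "i < K" for i
    using unitary_eigenvalue_norm[OF W eig[OF that]] orthonormal_family_nonzero[OF e that] .
  then have "unitary_eigenbasis W K e l"
    using e eig orthonormal_family_expansion[OF e complete] by unfold_locales
  then show ?thesis ..
qed

section \<open>Numerical range and operator norm\<close>

definition numerical_range :: "complex^'n^'n \<Rightarrow> complex set" where
  "numerical_range A = {cinner \<psi> (A *v \<psi>) | \<psi>. norm \<psi> = 1}"

lemma numerical_range_closest_to_origin:
  obtains z0 where "z0 \<in> numerical_range A" "\<forall>z\<in>numerical_range A. cmod z0 \<le> cmod z"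
proof -
  have range: "numerical_range A = (\<lambda>\<psi>. cinner \<psi> (A *v \<psi>)) ` sphere 0 1"
    by (auto simp: numerical_range_def)
  have "compact (numerical_range A)"
    unfolding range cinner_def matrix_vector_mult_def
    by (intro compact_continuous_image compact_sphere continuous_intros)
  moreover have "numerical_range A \<noteq> {}"
    unfolding range using vector_choose_size[of 1] by auto
  ultimately obtain z0 where "z0 \<in> numerical_range A" "\<And>z. z \<in> numerical_range A \<Longrightarrow> dist 0 z0 \<le> dist 0 z"
    using distance_attains_inf compact_imp_closed by metis
  then show ?thesis
    using that by simp
qed

lemma udist_eq_closest:
  assumes "z0 \<in> numerical_range (adjoint_mat U ** V)"
    and closest: "\<forall>z\<in>numerical_range (adjoint_mat U ** V). cmod z0 \<le> cmod z"
  shows "udist U V = sqrt (1 - (cmod z0)\<^sup>2)"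
proof -
  have "udist U V = Sup ((\<lambda>z. sqrt (1 - (cmod z)\<^sup>2)) ` numerical_range (adjoint_mat U ** V))"
    unfolding udist_def numerical_range_def by (rule arg_cong[where f = Sup]) auto
  also have "\<dots> = sqrt (1 - (cmod z0)\<^sup>2)"
    using assms by (intro cSup_eq_maximum) (auto intro!: power_mono)
  finally show ?thesis .
qed

lemma op_norm_unitary_diff:
  assumes U: "unitary_mat U"
  shows "op_norm (U - (\<chi> i j. c * V $ i $ j))
    = Sup {norm (\<psi> - c *s ((adjoint_mat U ** V) *v \<psi>)) | \<psi>. norm \<psi> = 1}"
proof -
  have "norm ((U - (\<chi> i j. c * V $ i $ j)) *v \<psi>) = norm (\<psi> - c *s ((adjoint_mat U ** V) *v \<psi>))"
    for \<psi>
  proof -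
    have "(U - (\<chi> i j. c * V $ i $ j)) *v \<psi> = U *v \<psi> - c *s (V *v \<psi>)"
      by (simp add: vec_eq_iff matrix_vector_mult_def sum_subtractf[symmetric] sum_distrib_left
          algebra_simps)
    then have "adjoint_mat U *v ((U - (\<chi> i j. c * V $ i $ j)) *v \<psi>)
        = \<psi> - c *s ((adjoint_mat U ** V) *v \<psi>)"
      by (simp add: vec.diff vec.scale unitary_mat_cancel[OF U] matrix_vector_mul_assoc[symmetric])
    then show ?thesis
      by (metis unitary_mat_norm[OF unitary_mat_adjoint[OF U]])
  qed
  then show ?thesis
    unfolding op_norm_def by simp
qed

context unitary_eigenbasis
begin

lemma eigenbasis_nonempty: "0 < K"
proof (rule ccontr)
  assume "\<not> 0 < K"
  moreover obtain v :: "complex^'n" where "norm v = 1"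
    using vector_choose_size[of 1] by auto
  ultimately show False
    using expansion[of v] by simp
qed

lemma cinner_eigenvector_mult:
  assumes "i < K"
  shows "cinner (e i) (W *v v) = l i * cinner (e i) v"
proof -
  have "W *v v = (\<Sum>j<K. (l j * cinner (e j) v) *s e j)"
    by (subst expansion[of v])
      (simp add: vec.sum vec.scale eigenvector vector_smult_assoc mult.commute)
  then show ?thesis
    using cinner_orthonormal_sum[OF orthonormal assms] by simp
qed

lemma cinner_expansion: "cinner u v = (\<Sum>i<K. cnj (cinner (e i) u) * cinner (e i) v)"
proof -
  have "cinner u v = cinner u (\<Sum>i<K. cinner (e i) v *s e i)"
    by (subst expansion) rule
  then show ?thesis
    by (simp add: cinner_sum_right cinner_scale_right cnj_cinner mult.commute)
qed

lemma norm_expansion: "(norm v)\<^sup>2 = (\<Sum>i<K. (cmod (cinner (e i) v))\<^sup>2)"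
proof -
  have "complex_of_real ((norm v)\<^sup>2) = complex_of_real (\<Sum>i<K. (cmod (cinner (e i) v))\<^sup>2)"
    using cinner_expansion[of v v]
    by (simp add: cinner_self complex_norm_square mult.commute del: of_real_power)
  then show ?thesis
    by (simp only: of_real_eq_iff)
qed

lemma cinner_self_W_expansion:
  "cinner v (W *v v) = (\<Sum>i<K. (cmod (cinner (e i) v))\<^sup>2 *\<^sub>R l i)"
  using cinner_expansion[of v "W *v v"]
  by (simp add: cinner_eigenvector_mult complex_norm_square scaleR_conv_of_real mult.commute
      mult.left_commute del: of_real_power)

lemma numerical_range_eq:
  "numerical_range W = {\<Sum>i<K. w i *\<^sub>R l i | w. (\<forall>i\<in>{..<K}. 0 \<le> w i) \<and> sum w {..<K} = 1}"
proof (intro equalityI subsetI)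
  fix z
  assume "z \<in> numerical_range W"
  then obtain v where "norm v = 1" "z = cinner v (W *v v)"
    by (auto simp: numerical_range_def)
  then show "z \<in> {\<Sum>i<K. w i *\<^sub>R l i | w. (\<forall>i\<in>{..<K}. 0 \<le> w i) \<and> sum w {..<K} = 1}"
    using norm_expansion[of v] by (auto simp: cinner_self_W_expansion)
next
  fix z
  assume "z \<in> {\<Sum>i<K. w i *\<^sub>R l i | w. (\<forall>i\<in>{..<K}. 0 \<le> w i) \<and> sum w {..<K} = 1}"
  then obtain w where w: "\<forall>i\<in>{..<K}. 0 \<le> w i" "sum w {..<K} = 1" and z: "z = (\<Sum>i<K. w i *\<^sub>R l i)"
    by blast
  define v where "v = (\<Sum>i<K. complex_of_real (sqrt (w i)) *s e i)"
  have coeff: "cmod (cinner (e i) v) = sqrt (w i)" if "i < K" for i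
    using that w(1) by (simp add: v_def cinner_orthonormal_sum[OF orthonormal])
  have "(norm v)\<^sup>2 = 1"
    using w by (simp add: norm_expansion coeff)
  then have "norm v = 1"
    by (simp add: abs_square_eq_1)
  moreover have "cinner v (W *v v) = z"
    using w(1) by (simp add: cinner_self_W_expansion coeff z)
  ultimately show "z \<in> numerical_range W"
    unfolding numerical_range_def by blast
qed

lemma convex_numerical_range: "convex (numerical_range W)"
  unfolding numerical_range_eq by (rule convex_convex_combinations)

lemma eigenvalue_in_numerical_range:
  assumes "i < K"
  shows "l i \<in> numerical_range W"
proof -
  have "cinner (e i) (e i) = 1"
    using orthonormal assms by (simp add: orthonormal_family_def)
  then have "norm (e i) = 1" and "cinner (e i) (W *v e i) = l i"
    by (simp_all add: cinner_self_eq_1_iff eigenvector[OF assms] cinner_scale_right)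
  then show ?thesis
    unfolding numerical_range_def by force
qed

lemma numerical_range_subset_cball: "numerical_range W \<subseteq> cball 0 1"
  unfolding numerical_range_eq
  by (auto intro!: convex_sum simp: eigenvalue_norm)

definition max_eigen_dist :: "complex \<Rightarrow> real" where
  "max_eigen_dist c = Max ((\<lambda>i. cmod (1 - c * l i)) ` {..<K})"

lemma max_eigen_dist_ge: "i < K \<Longrightarrow> cmod (1 - c * l i) \<le> max_eigen_dist c"
  unfolding max_eigen_dist_def by (intro Max_ge) auto

lemma max_eigen_dist_attained:
  obtains j where "j < K" "max_eigen_dist c = cmod (1 - c * l j)"
proof -
  have "max_eigen_dist c \<in> (\<lambda>i. cmod (1 - c * l i)) ` {..<K}"
    unfolding max_eigen_dist_def using eigenbasis_nonempty by (intro Max_in) auto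
  with that show ?thesis by auto
qed

lemma max_eigen_dist_nonneg: "0 \<le> max_eigen_dist c"
  using max_eigen_dist_ge[OF eigenbasis_nonempty] norm_ge_zero order_trans by blast

lemma max_eigen_dist_le:
  assumes "\<And>i. i < K \<Longrightarrow> cmod (1 - c * l i) \<le> r"
  shows "max_eigen_dist c \<le> r"
  using max_eigen_dist_attained assms by metis

lemma max_eigen_dist_le_2:
  assumes "cmod c = 1"
  shows "max_eigen_dist c \<le> 2"
proof (rule max_eigen_dist_le)
  fix i
  assume "i < K"
  have "cmod (1 - c * l i) \<le> 1 + cmod (c * l i)"
    using norm_triangle_ineq4[of 1 "c * l i"] by simp
  with assms \<open>i < K\<close> show "cmod (1 - c * l i) \<le> 2"
    by (simp add: norm_mult eigenvalue_norm)
qed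

lemma continuous_max_eigen_dist: "continuous_on UNIV (\<lambda>x. max_eigen_dist (cis x))"
  unfolding max_eigen_dist_def using eigenbasis_nonempty
  by (intro continuous_on_Max) (auto intro!: continuous_intros)

lemma norm_diff_smult_W:
  "(norm (v - c *s (W *v v)))\<^sup>2 = (\<Sum>i<K. (cmod (1 - c * l i))\<^sup>2 * (cmod (cinner (e i) v))\<^sup>2)"
proof -
  have "cinner (e i) (v - c *s (W *v v)) = (1 - c * l i) * cinner (e i) v" if "i < K" for i
    using that by (simp add: cinner_diff_right cinner_scale_right cinner_eigenvector_mult
        algebra_simps)
  then show ?thesis
    unfolding norm_expansion[of "v - c *s (W *v v)"]
    by (intro sum.cong refl) (simp add: norm_mult power_mult_distrib)
qed

lemma Sup_norm_diff_smult_W: "Sup {norm (v - c *s (W *v v)) | v. norm v = 1} = max_eigen_dist c"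
proof (rule cSup_eq_maximum)
  obtain j where j: "j < K" "max_eigen_dist c = cmod (1 - c * l j)"
    by (rule max_eigen_dist_attained)
  have "cinner (e j) (e j) = 1"
    using orthonormal j(1) by (simp add: orthonormal_family_def)
  then have "norm (e j) = 1"
    by (simp add: cinner_self_eq_1_iff)
  have "(norm (e j - c *s (W *v e j)))\<^sup>2
      = (\<Sum>i<K. if i = j then (cmod (1 - c * l j))\<^sup>2 else 0)"
    unfolding norm_diff_smult_W
    using orthonormal j(1) by (intro sum.cong) (auto simp: orthonormal_family_def)
  then have "(norm (e j - c *s (W *v e j)))\<^sup>2 = (cmod (1 - c * l j))\<^sup>2"
    using j(1) by simp
  then have "max_eigen_dist c = norm (e j - c *s (W *v e j))"
    unfolding j(2) by (rule power2_eq_imp_eq[symmetric]) simp_all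
  with \<open>norm (e j) = 1\<close> show "max_eigen_dist c \<in> {norm (v - c *s (W *v v)) | v. norm v = 1}"
    by blast
next
  fix y
  assume "y \<in> {norm (v - c *s (W *v v)) | v. norm v = 1}"
  then obtain v where v: "norm v = 1" and y: "y = norm (v - c *s (W *v v))"
    by blast
  have "y\<^sup>2 \<le> (\<Sum>i<K. (max_eigen_dist c)\<^sup>2 * (cmod (cinner (e i) v))\<^sup>2)"
    unfolding y norm_diff_smult_W
    by (intro sum_mono mult_right_mono power_mono max_eigen_dist_ge) auto
  also have "\<dots> = (max_eigen_dist c)\<^sup>2"
    using norm_expansion[of v] v by (simp add: sum_distrib_left[symmetric])
  finally show "y \<le> max_eigen_dist c"
    using max_eigen_dist_nonneg by (rule power2_le_imp_le)
qed

lemma max_eigen_dist_eq_2: "\<exists>x. max_eigen_dist (cis x) = 2"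
proof
  define x where "x = pi - Arg (l 0)"
  have "cis (Arg (l 0)) = l 0"
    using cis_Arg_unit eigenvalue_norm[OF eigenbasis_nonempty] .
  then have "cis x * l 0 = -1"
    by (metis cis_mult cis_pi diff_add_cancel x_def)
  then have "2 \<le> max_eigen_dist (cis x)"
    using max_eigen_dist_ge[OF eigenbasis_nonempty, of "cis x"] by simp
  with max_eigen_dist_le_2[of "cis x"] show "max_eigen_dist (cis x) = 2"
    by simp
qed

text \<open>Rotating by cnj z0 / |z0|, where z0 is the point of the numerical range closest to 0,
  moves every eigenvalue into the half-plane Re \<ge> |z0|.\<close>
lemma max_eigen_dist_le_closest:
  assumes z0: "z0 \<in> numerical_range W" and closest: "\<forall>z\<in>numerical_range W. cmod z0 \<le> cmod z"
  shows "\<exists>x. max_eigen_dist (cis x) \<le> 2 * sqrt (1 - (cmod z0)\<^sup>2)"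
proof (cases "z0 = 0")
  case True
  then show ?thesis
    using max_eigen_dist_le_2 by simp
next
  case False
  define m where "m = cmod z0"
  define c where "c = cnj z0 / complex_of_real m"
  have "0 < m" "m \<le> 1"
    using False z0 numerical_range_subset_cball by (auto simp: m_def)
  have "cmod c = 1"
    using \<open>0 < m\<close> by (simp add: c_def m_def norm_divide)
  then have "cis (Arg c) = c"
    by (rule cis_Arg_unit)
  have "max_eigen_dist c \<le> 2 * sqrt (1 - m\<^sup>2)"
  proof (rule max_eigen_dist_le)
    fix i
    assume "i < K"
    then have "m\<^sup>2 \<le> inner z0 (l i)"
      unfolding m_def
      by (intro closest_to_origin_inner_ge[OF convex_numerical_range z0 _ closest]
          eigenvalue_in_numerical_range)
    then have "m \<le> Re (c * l i)"
      using \<open>0 < m\<close> by (simp add: c_def inner_complex_def power2_eq_square field_simps)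
    with \<open>cmod c = 1\<close> \<open>0 < m\<close> \<open>m \<le> 1\<close> \<open>i < K\<close>
    show "cmod (1 - c * l i) \<le> 2 * sqrt (1 - m\<^sup>2)"
      by (intro cmod_one_minus_le eigenvalue_norm) auto
  qed
  with \<open>cis (Arg c) = c\<close> show ?thesis
    unfolding m_def by metis
qed

lemma max_eigen_dist_eq_closest:
  assumes "z0 \<in> numerical_range W" "\<forall>z\<in>numerical_range W. cmod z0 \<le> cmod z"
  shows "\<exists>x. max_eigen_dist (cis x) = 2 * sqrt (1 - (cmod z0)\<^sup>2)"
proof -
  define D where "D = sqrt (1 - (cmod z0)\<^sup>2)"
  obtain x0 where "max_eigen_dist (cis x0) \<le> 2 * D"
    using max_eigen_dist_le_closest[OF assms] unfolding D_def by blast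
  moreover obtain x1 where "max_eigen_dist (cis x1) = 2"
    using max_eigen_dist_eq_2 by blast
  moreover have "D \<le> 1"
    by (simp add: D_def)
  ultimately have "2 * D \<in> {max_eigen_dist (cis x0)..max_eigen_dist (cis x1)}"
    by simp
  moreover have "connected (range (\<lambda>x. max_eigen_dist (cis x)))"
    by (intro connected_continuous_image continuous_max_eigen_dist connected_UNIV)
  then have "{max_eigen_dist (cis x0)..max_eigen_dist (cis x1)} \<subseteq> range (\<lambda>x. max_eigen_dist (cis x))"
    by (rule connected_contains_Icc) (rule rangeI)+
  ultimately obtain x where "2 * D = max_eigen_dist (cis x)"
    by blast
  then show ?thesis
    unfolding D_def by metis
qed

end

theorem mainTheorem6:
  fixes U V :: "complex ^ 'n ^ 'n"
  assumes "unitary_mat U" and "unitary_mat V"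
  shows "\<exists>x::real. udist U V = 1/2 * op_norm (U - (\<chi> i j. exp (\<i> * complex_of_real x) * V $ i $ j))"
proof -
  define W where "W = adjoint_mat U ** V"
  have "unitary_mat W"
    unfolding W_def using assms by (intro unitary_mat_mult unitary_mat_adjoint)
  then obtain K e l where "unitary_eigenbasis W K e l"
    by (rule unitary_eigenbasis_exists)
  then interpret unitary_eigenbasis W K e l .
  obtain z0 where z0: "z0 \<in> numerical_range W" "\<forall>z\<in>numerical_range W. cmod z0 \<le> cmod z"
    by (rule numerical_range_closest_to_origin)
  then obtain x where "max_eigen_dist (cis x) = 2 * sqrt (1 - (cmod z0)\<^sup>2)"
    using max_eigen_dist_eq_closest by blast
  moreover have "udist U V = sqrt (1 - (cmod z0)\<^sup>2)"
    using udist_eq_closest z0 unfolding W_def by blast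
  moreover have "op_norm (U - (\<chi> i j. exp (\<i> * complex_of_real x) * V $ i $ j))
      = max_eigen_dist (cis x)"
    by (simp add: op_norm_unitary_diff[OF assms(1)] Sup_norm_diff_smult_W cis_conv_exp
        W_def[symmetric])
  ultimately show ?thesis
    by (intro exI[of _ x]) simp
qed

end
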